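(* Let $\mathbb{K}\in\{\mathbb{R},\mathbb{C}\}$ and let $\mathcal{X}$ be a topological $\mathbb{K}$-vector space whose topological dual $\mathcal{X}^{\ast}$ separates the points of $\mathcal{X}$. Let $\mathcal{V}_1,\mathcal{V}_2\in\mathcal{C}$ be cylinders such that $\mathbf{B}_{\mathcal{V}_1}(\mathcal{X}^{\ast})\subsetneq\mathbf{B}_{\mathcal{V}_2}(\mathcal{X}^{\ast})$. Then for every $F_1\in\mathbf{B}_{\mathcal{V}_1}(\mathcal{X}^{\ast})$ and every $F_2\in\mathbf{B}_{\mathcal{V}_2}(\mathcal{X}^{\ast})\setminus\mathbf{B}_{\mathcal{V}_1}(\mathcal{X}^{\ast})$ there is $A\in\mathcal{X}$ with $d_H^{(A)}(F_1,F_2)=\infty$. In particular, for every $B\in\mathbf{B}(\mathcal{X}^{\ast})$ and every $F\in\mathbf{F}(\mathcal{X}^{\ast})\setminus\mathbf{B}(\mathcal{X}^{\ast})$ there is $A\in\mathcal{X}$ with $d_H^{(A)}(B,F)=\infty$.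
   Context: Topological vector spaces are Hausdorff (Rudin's definition). $\mathcal{X}^{\ast}$ carries the weak* topology $\sigma(\mathcal{X}^{\ast},\mathcal{X})$. $\mathbf{F}(\mathcal{X}^{\ast})$ is the set of nonempty weak*-closed subsets of $\mathcal{X}^{\ast}$. For $A\in\mathcal{X}$ and $F,\tilde F\in\mathbf{F}(\mathcal{X}^{\ast})$, $d_H^{(A)}(F,\tilde F)=\max\{\sup_{\sigma\in F}\inf_{\tilde\sigma\in\tilde F}|(\sigma-\tilde\sigma)(A)|,\ \sup_{\tilde\sigma\in\tilde F}\inf_{\sigma\in F}|(\sigma-\tilde\sigma)(A)|\}\in[0,\infty]$. For $A\in\mathcal{X}$ let $\mathcal{V}_A=\{\sigma\in\mathcal{X}^{\ast}:|\sigma(A)|<1\}$; the set of cylinders is $\mathcal{C}=\{\bigcap_{j=1}^n\mathcal{V}_{A_j}: n\in\mathbb{N},\ A_1,\dots,A_n\in\mathcal{X}\}$. For $\mathcal{V}\in\mathcal{C}$, $\mathbf{B}_{\mathcal{V}}(\mathcal{X}^{\ast})=\{B\in\mathbf{F}(\mathcal{X}^{\ast}): B\subseteq\lambda\mathcal{V}\text{ for some }\lambda>0\}$, and $\mathbf{B}(\mathcal{X}^{\ast})=\bigcap_{\mathcal{V}\in\mathcal{C}}\mathbf{B}_{\mathcal{V}}(\mathcal{X}^{\ast})$ (the nonempty bounded weak*-closed subsets). *)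

theory Defs
  imports "HOL-Analysis.Analysis" "HOL-Library.Extended_Real"
begin

definition is_tvs :: "('k::real_normed_field \<Rightarrow> 'x::{ab_group_add,t2_space} \<Rightarrow> 'x) \<Rightarrow> bool" where
  "is_tvs sc \<longleftrightarrow> Vector_Spaces.vector_space sc
     \<and> continuous_on UNIV (\<lambda>p::'x \<times> 'x. fst p + snd p)
     \<and> continuous_on UNIV (\<lambda>p::'k \<times> 'x. sc (fst p) (snd p))"

definition tdual :: "('k::real_normed_field \<Rightarrow> 'x::{ab_group_add,t2_space} \<Rightarrow> 'x) \<Rightarrow> ('x \<Rightarrow> 'k) set" where
  "tdual sc = {f. Vector_Spaces.linear sc ((*)) f \<and> continuous_on UNIV f}"

definition dual_separates_points :: "('k::real_normed_field \<Rightarrow> 'x::{ab_group_add,t2_space} \<Rightarrow> 'x) \<Rightarrow> bool" where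
  "dual_separates_points sc \<longleftrightarrow> (\<forall>x y. x \<noteq> y \<longrightarrow> (\<exists>f\<in>tdual sc. f x \<noteq> f y))"

text \<open>Weak* topology: initial topology of the evaluation maps, i.e. the subspace
  topology induced by the product (pointwise convergence) topology.\<close>
definition weak_star :: "('k::real_normed_field \<Rightarrow> 'x::{ab_group_add,t2_space} \<Rightarrow> 'x) \<Rightarrow> ('x \<Rightarrow> 'k) topology" where
  "weak_star sc = subtopology (product_topology (\<lambda>_. euclidean) UNIV) (tdual sc)"

definition Fsets :: "('k::real_normed_field \<Rightarrow> 'x::{ab_group_add,t2_space} \<Rightarrow> 'x) \<Rightarrow> ('x \<Rightarrow> 'k) set set" where
  "Fsets sc = {F. F \<noteq> {} \<and> F \<subseteq> tdual sc \<and> closedin (weak_star sc) F}"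

definition dH :: "'x \<Rightarrow> ('x \<Rightarrow> 'k::real_normed_field) set \<Rightarrow> ('x \<Rightarrow> 'k) set \<Rightarrow> ereal" where
  "dH A F G = max (SUP \<sigma>\<in>F. INF \<tau>\<in>G. ereal (norm ((\<sigma> A) - (\<tau> A))))
                  (SUP \<tau>\<in>G. INF \<sigma>\<in>F. ereal (norm ((\<sigma> A) - (\<tau> A))))"

definition cylV :: "('k::real_normed_field \<Rightarrow> 'x::{ab_group_add,t2_space} \<Rightarrow> 'x) \<Rightarrow> 'x \<Rightarrow> ('x \<Rightarrow> 'k) set" where
  "cylV sc A = {\<sigma> \<in> tdual sc. norm (\<sigma> A) < 1}"

definition cylinders :: "('k::real_normed_field \<Rightarrow> 'x::{ab_group_add,t2_space} \<Rightarrow> 'x) \<Rightarrow> ('x \<Rightarrow> 'k) set set" where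
  "cylinders sc = {(\<Inter>A\<in>As. cylV sc A) | As. finite As \<and> As \<noteq> {}}"

definition dual_scale :: "real \<Rightarrow> ('x \<Rightarrow> 'k::real_normed_field) set \<Rightarrow> ('x \<Rightarrow> 'k) set" where
  "dual_scale l V = (\<lambda>\<sigma>. \<lambda>x. of_real l * \<sigma> x) ` V"

definition BV :: "('k::real_normed_field \<Rightarrow> 'x::{ab_group_add,t2_space} \<Rightarrow> 'x) \<Rightarrow> ('x \<Rightarrow> 'k) set \<Rightarrow> ('x \<Rightarrow> 'k) set set" where
  "BV sc V = {B \<in> Fsets sc. \<exists>l>0. B \<subseteq> dual_scale l V}"

definition Bsets :: "('k::real_normed_field \<Rightarrow> 'x::{ab_group_add,t2_space} \<Rightarrow> 'x) \<Rightarrow> ('x \<Rightarrow> 'k) set set" where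
  "Bsets sc = (\<Inter>V\<in>cylinders sc. BV sc V)"

end

theory Submission
  imports Defs
begin

text \<open>For a cylinder \<open>V = \<Inter>A\<in>As. V\<^sub>A\<close>, a set \<open>F\<close> of functionals lies in some \<open>\<lambda>V\<close> iff
  it is bounded at each of the finitely many points \<open>A \<in> As\<close>. So if \<open>F\<^sub>1 \<in> B\<^sub>V\<close> and
  \<open>F\<^sub>2 \<notin> B\<^sub>V\<close>, there is an \<open>A \<in> As\<close> at which the values of \<open>F\<^sub>1\<close> stay bounded while those
  of \<open>F\<^sub>2\<close> do not; then every \<open>\<tau> \<in> F\<^sub>2\<close> with large \<open>\<tau> A\<close> is far from all of \<open>F\<^sub>1\<close>, which
  forces \<open>d\<^sub>H\<^sup>(\<^sup>A\<^sup>)(F\<^sub>1, F\<^sub>2) = \<infinity>\<close>. Neither the topology of the space nor the separation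
  property of its dual plays any role.\<close>

lemma tdual_mult_left:
  fixes sc :: "'k::real_normed_field \<Rightarrow> 'x::{ab_group_add,t2_space} \<Rightarrow> 'x"
  assumes "\<tau> \<in> tdual sc"
  shows "(\<lambda>x. c * \<tau> x) \<in> tdual sc"
proof -
  have lin: "Vector_Spaces.linear sc (*) \<tau>" and cont: "continuous_on UNIV \<tau>"
    using assms by (auto simp: tdual_def)
  have "Vector_Spaces.linear sc (*) (\<lambda>x. c * \<tau> x)"
    using lin unfolding Vector_Spaces.linear_iff by (auto simp: distrib_left mult.left_commute)
  moreover have "continuous_on UNIV (\<lambda>x. c * \<tau> x)"
    by (intro continuous_intros cont)
  ultimately show ?thesis by (simp add: tdual_def)
qed

lemma bounded_eval_if_subset_dual_scale_cylinder:
  fixes sc :: "'k::real_normed_field \<Rightarrow> 'x::{ab_group_add,t2_space} \<Rightarrow> 'x"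
  assumes l: "l > 0" "F \<subseteq> dual_scale l (\<Inter>A\<in>As. cylV sc A)" and A: "A \<in> As"
  shows "bounded ((\<lambda>\<tau>. \<tau> A) ` F)"
proof (rule boundedI)
  fix z assume "z \<in> (\<lambda>\<tau>. \<tau> A) ` F"
  then obtain \<sigma> where "\<sigma> \<in> cylV sc A" "z = of_real l * \<sigma> A"
    using l(2) A unfolding dual_scale_def by blast
  then show "norm z \<le> l" using l(1) by (simp add: cylV_def norm_mult)
qed

lemma subset_dual_scale_cylinder_if_bounded_eval:
  fixes sc :: "'k::real_normed_field \<Rightarrow> 'x::{ab_group_add,t2_space} \<Rightarrow> 'x"
  assumes fin: "finite As" and F: "F \<subseteq> tdual sc"
    and bounded: "\<forall>A\<in>As. bounded ((\<lambda>\<tau>. \<tau> A) ` F)"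
  shows "\<exists>l>0. F \<subseteq> dual_scale l (\<Inter>A\<in>As. cylV sc A)"
proof -
  obtain M where M: "\<And>A \<tau>. A \<in> As \<Longrightarrow> \<tau> \<in> F \<Longrightarrow> norm (\<tau> A) \<le> M A"
    using bounded unfolding bounded_iff by (metis image_eqI)
  define l where "l = Max (insert 0 (M ` As)) + 1"
  have "0 \<le> Max (insert 0 (M ` As))" "A \<in> As \<Longrightarrow> M A \<le> Max (insert 0 (M ` As))" for A
    using fin by simp_all
  then have l_pos: "l > 0" and M_less_l: "A \<in> As \<Longrightarrow> M A < l" for A
    by (force simp: l_def)+
  have "F \<subseteq> dual_scale l (\<Inter>A\<in>As. cylV sc A)"
  proof
    fix \<tau> assume \<tau>: "\<tau> \<in> F"
    define \<sigma> where "\<sigma> = (\<lambda>x. of_real (1/l) * \<tau> x)"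
    have \<sigma>_dual: "\<sigma> \<in> tdual sc" unfolding \<sigma>_def using \<tau> F tdual_mult_left by blast
    have "\<sigma> \<in> cylV sc A" if "A \<in> As" for A
    proof -
      have "norm (\<tau> A) < l" using M[OF that \<tau>] M_less_l[OF that] by linarith
      then have "norm (\<sigma> A) < 1"
        using l_pos by (simp add: \<sigma>_def norm_mult norm_divide divide_less_eq)
      then show ?thesis using \<sigma>_dual by (simp add: cylV_def)
    qed
    moreover have "\<tau> = (\<lambda>x. of_real l * \<sigma> x)"
      using l_pos by (simp add: \<sigma>_def mult.assoc[symmetric] flip: of_real_mult)
    ultimately show "\<tau> \<in> dual_scale l (\<Inter>A\<in>As. cylV sc A)"
      unfolding dual_scale_def by blast
  qed
  then show ?thesis using l_pos by blast
qed

lemma subset_dual_scale_cylinder_iff: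
  fixes sc :: "'k::real_normed_field \<Rightarrow> 'x::{ab_group_add,t2_space} \<Rightarrow> 'x"
  assumes "finite As" and "F \<subseteq> tdual sc"
  shows "(\<exists>l>0. F \<subseteq> dual_scale l (\<Inter>A\<in>As. cylV sc A))
     \<longleftrightarrow> (\<forall>A\<in>As. bounded ((\<lambda>\<tau>. \<tau> A) ` F))"
  using assms bounded_eval_if_subset_dual_scale_cylinder subset_dual_scale_cylinder_if_bounded_eval
  by metis

lemma dH_eq_infinity_if_bounded_unbounded:
  fixes F G :: "('x \<Rightarrow> 'k::real_normed_field) set"
  assumes bF: "bounded ((\<lambda>\<sigma>. \<sigma> A) ` F)" and ubG: "\<not> bounded ((\<lambda>\<tau>. \<tau> A) ` G)"
  shows "dH A F G = \<infinity>"
proof -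
  obtain K where K: "\<And>\<sigma>. \<sigma> \<in> F \<Longrightarrow> norm (\<sigma> A) \<le> K"
    using bF unfolding bounded_iff by blast
  have "(SUP \<tau>\<in>G. INF \<sigma>\<in>F. ereal (norm (\<sigma> A - \<tau> A))) = \<infinity>"
  proof (rule ereal_top)
    fix B
    obtain \<tau> where \<tau>: "\<tau> \<in> G" "norm (\<tau> A) > B + K"
      using ubG unfolding bounded_iff by (force simp: not_le)
    have "ereal B \<le> (INF \<sigma>\<in>F. ereal (norm (\<sigma> A - \<tau> A)))"
    proof (rule INF_greatest)
      fix \<sigma> assume "\<sigma> \<in> F"
      moreover have "norm (\<tau> A) \<le> norm (\<sigma> A - \<tau> A) + norm (\<sigma> A)"
        by (metis norm_minus_commute norm_triangle_sub add.commute)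
      ultimately show "ereal B \<le> ereal (norm (\<sigma> A - \<tau> A))" using K \<tau>(2) by force
    qed
    then show "ereal B \<le> (SUP \<tau>\<in>G. INF \<sigma>\<in>F. ereal (norm (\<sigma> A - \<tau> A)))"
      using \<tau>(1) by (meson SUP_upper2)
  qed
  then show ?thesis by (simp add: dH_def)
qed

lemma dH_eq_infinity_outside_BV:
  fixes sc :: "'k::real_normed_field \<Rightarrow> 'x::{ab_group_add,t2_space} \<Rightarrow> 'x"
  assumes V: "V \<in> cylinders sc" and F1: "F1 \<in> BV sc V" and F2: "F2 \<in> Fsets sc - BV sc V"
  shows "\<exists>A. dH A F1 F2 = \<infinity>"
proof -
  obtain As where As: "finite As" "V = (\<Inter>A\<in>As. cylV sc A)"
    using V by (auto simp: cylinders_def)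
  have "F1 \<subseteq> tdual sc" "\<exists>l>0. F1 \<subseteq> dual_scale l V"
    using F1 by (simp_all add: BV_def Fsets_def)
  then have F1_bounded: "\<forall>A\<in>As. bounded ((\<lambda>\<sigma>. \<sigma> A) ` F1)"
    using subset_dual_scale_cylinder_iff As by blast
  have "F2 \<subseteq> tdual sc" "\<not> (\<exists>l>0. F2 \<subseteq> dual_scale l V)"
    using F2 by (auto simp: BV_def Fsets_def)
  then have "\<not> (\<forall>A\<in>As. bounded ((\<lambda>\<tau>. \<tau> A) ` F2))"
    using subset_dual_scale_cylinder_iff As by blast
  then obtain A where "A \<in> As" "\<not> bounded ((\<lambda>\<tau>. \<tau> A) ` F2)" by blast
  then show ?thesis using F1_bounded dH_eq_infinity_if_bounded_unbounded[of A F1 F2] by blast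
qed

lemma dH_eq_infinity_BV_Bsets:
  fixes sc :: "'k::real_normed_field \<Rightarrow> 'x::{ab_group_add,t2_space} \<Rightarrow> 'x"
  shows "(\<forall>V1\<in>cylinders sc. \<forall>V2\<in>cylinders sc. BV sc V1 \<subset> BV sc V2 \<longrightarrow>
            (\<forall>F1\<in>BV sc V1. \<forall>F2\<in>BV sc V2 - BV sc V1. \<exists>A. dH A F1 F2 = \<infinity>))
       \<and> (\<forall>B\<in>Bsets sc. \<forall>F\<in>Fsets sc - Bsets sc. \<exists>A. dH A B F = \<infinity>)"
proof (intro conjI ballI impI)
  fix V1 V2 F1 F2
  assume "V1 \<in> cylinders sc" "F1 \<in> BV sc V1" "F2 \<in> BV sc V2 - BV sc V1"
  moreover have "BV sc V2 \<subseteq> Fsets sc" by (auto simp: BV_def)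
  ultimately show "\<exists>A. dH A F1 F2 = \<infinity>" using dH_eq_infinity_outside_BV by blast
next
  fix B F assume "B \<in> Bsets sc" and F: "F \<in> Fsets sc - Bsets sc"
  then obtain V where "V \<in> cylinders sc" "F \<notin> BV sc V" "B \<in> BV sc V"
    by (auto simp: Bsets_def)
  then show "\<exists>A. dH A B F = \<infinity>" using F dH_eq_infinity_outside_BV by blast
qed

theorem proposition3p2:
  fixes sR :: "real \<Rightarrow> 'x::{ab_group_add,t2_space} \<Rightarrow> 'x"
    and sC :: "complex \<Rightarrow> 'y::{ab_group_add,t2_space} \<Rightarrow> 'y"
  shows "(is_tvs sR \<and> dual_separates_points sR \<longrightarrow>
            (\<forall>V1\<in>cylinders sR. \<forall>V2\<in>cylinders sR. BV sR V1 \<subset> BV sR V2 \<longrightarrow>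
               (\<forall>F1\<in>BV sR V1. \<forall>F2\<in>BV sR V2 - BV sR V1. \<exists>A. dH A F1 F2 = \<infinity>))
          \<and> (\<forall>B\<in>Bsets sR. \<forall>F\<in>Fsets sR - Bsets sR. \<exists>A. dH A B F = \<infinity>))
       \<and> (is_tvs sC \<and> dual_separates_points sC \<longrightarrow>
            (\<forall>V1\<in>cylinders sC. \<forall>V2\<in>cylinders sC. BV sC V1 \<subset> BV sC V2 \<longrightarrow>
               (\<forall>F1\<in>BV sC V1. \<forall>F2\<in>BV sC V2 - BV sC V1. \<exists>A. dH A F1 F2 = \<infinity>))
          \<and> (\<forall>B\<in>Bsets sC. \<forall>F\<in>Fsets sC - Bsets sC. \<exists>A. dH A B F = \<infinity>))"
  using dH_eq_infinity_BV_Bsets[of sR] dH_eq_infinity_BV_Bsets[of sC] by blast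

end
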